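(* Let $T=(S,E)$ be a finite tree to which a unique self-loop has been added at one vertex, and consider simple random walk on it. Then its relaxation time satisfies \[ t_{\rm rel}\le \big(2\,\mathrm{diam}(T)+1\big)|E|. \]
   Context: $|E|$ counts the self-loop as one edge. Degrees count the self-loop twice; simple random walk moves from $v$ along a uniformly chosen edge-end at $v$, so it is irreducible, aperiodic and reversible with respect to $\pi(v)=\deg(v)/\sum_z\deg(z)$. If $1=\lambda_1>\lambda_2\ge\dots\ge\lambda_{|S|}>-1$ are the eigenvalues of its transition matrix, the absolute spectral gap is $\gamma_*=1-\max_{i\ge2}|\lambda_i|$ and the relaxation time is $t_{\rm rel}=1/\gamma_*$. $\mathrm{diam}(T)$ is the maximal graph distance between two vertices. *)

theory Defs
  imports "Jordan_Normal_Form.Char_Poly" "HOL-Library.Multiset"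
begin

definition simple_graph :: "nat \<Rightarrow> (nat \<Rightarrow> nat \<Rightarrow> bool) \<Rightarrow> bool" where
  "simple_graph n adj \<longleftrightarrow>
     (\<forall>u v. adj u v \<longrightarrow> u < n \<and> v < n) \<and>
     (\<forall>u v. adj u v \<longrightarrow> adj v u) \<and> (\<forall>u. \<not> adj u u)"

definition is_walk :: "(nat \<Rightarrow> nat \<Rightarrow> bool) \<Rightarrow> nat list \<Rightarrow> bool" where
  "is_walk adj vs \<longleftrightarrow> vs \<noteq> [] \<and> (\<forall>i. Suc i < length vs \<longrightarrow> adj (vs ! i) (vs ! Suc i))"

definition graph_connected :: "nat \<Rightarrow> (nat \<Rightarrow> nat \<Rightarrow> bool) \<Rightarrow> bool" where
  "graph_connected n adj \<longleftrightarrow>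
     (\<forall>u<n. \<forall>v<n. \<exists>vs. is_walk adj vs \<and> hd vs = u \<and> last vs = v)"

definition is_cycle :: "(nat \<Rightarrow> nat \<Rightarrow> bool) \<Rightarrow> nat list \<Rightarrow> bool" where
  "is_cycle adj vs \<longleftrightarrow> length vs \<ge> 3 \<and> distinct vs \<and> is_walk adj vs \<and> adj (last vs) (hd vs)"

definition is_tree :: "nat \<Rightarrow> (nat \<Rightarrow> nat \<Rightarrow> bool) \<Rightarrow> bool" where
  "is_tree n adj \<longleftrightarrow> 0 < n \<and> simple_graph n adj \<and> graph_connected n adj \<and>
     (\<nexists>vs. is_cycle adj vs)"

definition graph_dist :: "(nat \<Rightarrow> nat \<Rightarrow> bool) \<Rightarrow> nat \<Rightarrow> nat \<Rightarrow> nat" where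
  "graph_dist adj u v = (LEAST k. \<exists>vs. is_walk adj vs \<and> hd vs = u \<and> last vs = v \<and> length vs = Suc k)"

definition diam :: "nat \<Rightarrow> (nat \<Rightarrow> nat \<Rightarrow> bool) \<Rightarrow> nat" where
  "diam n adj = Max {graph_dist adj u v | u v. u < n \<and> v < n}"

text \<open>Number of edges of the tree plus the added self-loop at r (counted once).\<close>
definition num_edges_loop :: "nat \<Rightarrow> (nat \<Rightarrow> nat \<Rightarrow> bool) \<Rightarrow> nat" where
  "num_edges_loop n adj = card {(u, v). u < v \<and> v < n \<and> adj u v} + 1"

text \<open>Degree in the tree with a self-loop at r (the loop counts twice).\<close>
definition deg_loop :: "nat \<Rightarrow> (nat \<Rightarrow> nat \<Rightarrow> bool) \<Rightarrow> nat \<Rightarrow> nat \<Rightarrow> nat" where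
  "deg_loop n adj r v = card {w. w < n \<and> adj v w} + (if v = r then 2 else 0)"

text \<open>Transition matrix of simple random walk: move along a uniformly chosen edge-end.\<close>
definition srw_matrix :: "nat \<Rightarrow> (nat \<Rightarrow> nat \<Rightarrow> bool) \<Rightarrow> nat \<Rightarrow> real mat" where
  "srw_matrix n adj r = mat n n (\<lambda>(u, v).
      ((if adj u v then 1 else 0) + (if u = v \<and> u = r then 2 else 0)) / real (deg_loop n adj r u))"

text \<open>Given the eigenvalues with multiplicity (list of roots of the characteristic
  polynomial), the absolute spectral gap 1 - max_{i>=2} |lambda_i|, where lambda_1 = 1
  is removed once from the multiset.\<close>
definition abs_spectral_gap :: "complex list \<Rightarrow> real" where
  "abs_spectral_gap evs = 1 - Max (insert 0 (cmod ` set_mset (mset evs - {#1#})))"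

definition relaxation_time :: "complex list \<Rightarrow> real" where
  "relaxation_time evs = 1 / abs_spectral_gap evs"

end

theory Submission
  imports Defs
begin

text \<open>
  Write the walk as \<open>P = D\<^sup>-\<^sup>1 K\<close>, with \<open>K\<close> the symmetric matrix of edge weights (the loop
  weighing \<open>2\<close>) and \<open>D\<close> the diagonal of degrees. Since \<open>P\<close> has row sums \<open>1\<close> and stationary
  vector \<open>\<pi> = D 1 / 2|E|\<close>, the characteristic polynomial of \<open>P\<close> is \<open>(x - 1) Q\<close> where the
  nonzero roots of \<open>Q\<close> are eigenvalues of \<open>P\<close> whose eigenvectors are orthogonal to \<open>D 1\<close>. For
  such an eigenvalue, reality of the generalized eigenproblem \<open>K g = \<mu> D g\<close> yields a real
  eigenfunction \<open>g\<close> with \<open>\<Sum> deg g = 0\<close>; let \<open>z\<close> maximise \<open>g\<^sup>2\<close>, so that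
  \<open>S = \<Sum> deg g\<^sup>2 \<le> 2|E| g(z)\<^sup>2\<close>.

  Since \<open>g\<close> changes sign, Cauchy-Schwarz along a shortest path from \<open>z\<close> to a vertex \<open>w\<close> with
  \<open>g(z) g(w) \<le> 0\<close> gives \<open>g(z)\<^sup>2 \<le> diam \<cdot> \<Sum>\<^bsub>edges\<^esub> (g x - g y)\<^sup>2 = diam (1 - \<mu>) S\<close>.
  For \<open>1 + \<mu>\<close>, write \<open>g(z)\<close> as an alternating sum of \<open>g x + g y\<close> along a shortest path to the
  loop vertex \<open>r\<close>, plus \<open>\<plusminus> g(r)\<close>; the loop contributes \<open>8 g(r)\<^sup>2\<close> to
  \<open>\<Sum> K (g x + g y)\<^sup>2 = 2 (1 + \<mu>) S\<close>, giving \<open>g(z)\<^sup>2 \<le> (diam + 1/4) (1 + \<mu>) S\<close>. Both bounds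
  give \<open>1 - |\<mu>| \<ge> 1 / ((2 diam + 1) |E|)\<close>.
\<close>

section \<open>Shortest paths\<close>

lemma is_walk_cut_cycle:
  assumes walk: "is_walk adj vs" and ij: "i < j" "j < length vs" "vs ! i = vs ! j"
  shows "is_walk adj (take (Suc i) vs @ drop (Suc j) vs)"
proof -
  define ws where "ws = take (Suc i) vs @ drop (Suc j) vs"
  have len: "length ws = length vs - (j - i)"
    using ij unfolding ws_def by auto
  have prefix: "ws ! m = vs ! m" if "m \<le> i" for m
    using ij that unfolding ws_def by (auto simp: nth_append)
  have suffix: "ws ! (Suc i + m) = vs ! (Suc j + m)" if "Suc i + m < length ws" for m
    using ij that unfolding ws_def by (auto simp: nth_append)
  have step: "adj (vs ! m) (vs ! Suc m)" if "Suc m < length vs" for m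
    using walk that unfolding is_walk_def by auto
  have "is_walk adj ws"
    unfolding is_walk_def
  proof (intro conjI allI impI)
    show "ws \<noteq> []"
      using ij unfolding ws_def by auto
    fix m assume m: "Suc m < length ws"
    consider "Suc m \<le> i" | "m = i" | t where "m = Suc i + t"
      by (metis add_Suc less_imp_Suc_add not_less_eq_eq order.order_iff_strict)
    then show "adj (ws ! m) (ws ! Suc m)"
    proof cases
      case 1
      then show ?thesis using prefix[of m] prefix[of "Suc m"] step[of m] ij by auto
    next
      case 2
      then show ?thesis using prefix[of m] suffix[of 0] step[of j] m ij len by auto
    next
      case (3 t)
      then show ?thesis using suffix[of t] suffix[of "Suc t"] step[of "Suc j + t"] m len ij by auto
    qed
  qed
  then show ?thesis
    unfolding ws_def .
qed

lemma is_walk_shortcut: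
  assumes walk: "is_walk adj vs" and "\<not> distinct vs"
  shows "\<exists>ws. is_walk adj ws \<and> hd ws = hd vs \<and> last ws = last vs \<and> length ws < length vs"
proof -
  from assms(2) obtain i j where ij: "i < j" "j < length vs" "vs ! i = vs ! j"
    by (metis distinct_conv_nth linorder_neqE_nat)
  define ws where "ws = take (Suc i) vs @ drop (Suc j) vs"
  have "hd ws = hd vs"
    using ij unfolding ws_def by (cases vs) auto
  moreover have "last ws = last vs"
  proof (cases "Suc j < length vs")
    case True
    then show ?thesis unfolding ws_def by auto
  next
    case False
    then have "ws = take (Suc i) vs" and "j = length vs - 1"
      using ij unfolding ws_def by auto
    moreover have "last (take (Suc i) vs) = vs ! i"
      using ij by (simp add: take_Suc_conv_app_nth)
    moreover have "vs \<noteq> []"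
      using ij by auto
    ultimately show ?thesis
      using ij by (auto simp: last_conv_nth)
  qed
  moreover have "length ws < length vs"
    using ij unfolding ws_def by auto
  ultimately show ?thesis
    using is_walk_cut_cycle[OF walk ij] unfolding ws_def by blast
qed

lemma shortest_walk_distinct:
  assumes "graph_connected n adj" "u < n" "v < n"
  obtains p where "is_walk adj p" "hd p = u" "last p = v" "distinct p"
    "length p = Suc (graph_dist adj u v)"
proof -
  let ?Q = "\<lambda>k. \<exists>vs. is_walk adj vs \<and> hd vs = u \<and> last vs = v \<and> length vs = Suc k"
  obtain vs where "is_walk adj vs" "hd vs = u" "last vs = v"
    using assms unfolding graph_connected_def by blast
  then have "?Q (length vs - 1)"
    unfolding is_walk_def by (intro exI[of _ vs]) auto
  then have "?Q (graph_dist adj u v)"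
    unfolding graph_dist_def by (rule LeastI)
  then obtain p where p: "is_walk adj p" "hd p = u" "last p = v" "length p = Suc (graph_dist adj u v)"
    by blast
  have "distinct p"
  proof (rule ccontr)
    assume "\<not> distinct p"
    then obtain ws where ws: "is_walk adj ws" "hd ws = u" "last ws = v" "length ws < length p"
      using is_walk_shortcut[OF p(1)] p by auto
    then have "?Q (length ws - 1)"
      unfolding is_walk_def by (intro exI[of _ ws]) auto
    then have "graph_dist adj u v \<le> length ws - 1"
      unfolding graph_dist_def by (rule Least_le)
    then show False
      using ws p unfolding is_walk_def by (cases ws) auto
  qed
  then show ?thesis using p that by blast
qed

lemma graph_dist_le_diam:
  assumes "u < n" "v < n"
  shows "graph_dist adj u v \<le> diam n adj"
proof -
  have "{graph_dist adj u v | u v. u < n \<and> v < n} = (\<lambda>(u, v). graph_dist adj u v) ` ({..<n} \<times> {..<n})"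
    by auto
  then have "finite {graph_dist adj u v | u v. u < n \<and> v < n}"
    by simp
  then show ?thesis
    unfolding diam_def by (rule Max_ge) (use assms in blast)
qed

lemma path_within_diam:
  assumes "graph_connected n adj" "u < n" "v < n"
  obtains p k where "is_walk adj p" "distinct p" "length p = Suc k" "k \<le> diam n adj"
    "p ! 0 = u" "p ! k = v"
proof -
  obtain p where p: "is_walk adj p" "hd p = u" "last p = v" "distinct p"
      "length p = Suc (graph_dist adj u v)"
    using shortest_walk_distinct[OF assms] .
  have "p \<noteq> []"
    using p(5) by auto
  then show ?thesis
    using that[OF p(1,4,5) graph_dist_le_diam[OF assms(2,3)]] p
    by (simp add: hd_conv_nth last_conv_nth)
qed

lemma sum_adj_pairs:
  fixes h :: "nat \<Rightarrow> nat \<Rightarrow> real"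
  shows "(\<Sum>x<n. \<Sum>y<n. if adj x y then h x y else 0) = (\<Sum>(x, y)\<in>{(x, y). x < n \<and> y < n \<and> adj x y}. h x y)"
proof -
  have "(\<Sum>x<n. \<Sum>y<n. if adj x y then h x y else 0)
      = (\<Sum>e\<in>{..<n} \<times> {..<n}. if case_prod adj e then case_prod h e else 0)"
    unfolding sum.cartesian_product by (rule sum.cong) (auto split: prod.splits)
  also have "\<dots> = (\<Sum>e\<in>({..<n} \<times> {..<n}) \<inter> {e. case_prod adj e}. case_prod h e)"
    by (simp add: sum.inter_restrict)
  also have "({..<n} \<times> {..<n}) \<inter> {e. case_prod adj e} = {(x, y). x < n \<and> y < n \<and> adj x y}"
    by auto
  finally show ?thesis .
qed

text \<open>A distinct walk uses each edge at most once and in one direction, while the right-hand side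
  counts both directions.\<close>
lemma distinct_walk_edge_sum_le:
  fixes h :: "nat \<Rightarrow> nat \<Rightarrow> real"
  assumes simple: "simple_graph n adj" and walk: "is_walk adj p" and "distinct p"
    and len: "length p = Suc k"
    and sym: "\<And>x y. h x y = h y x" and nonneg: "\<And>x y. h x y \<ge> 0"
  shows "2 * (\<Sum>i<k. h (p ! i) (p ! Suc i)) \<le> (\<Sum>x<n. \<Sum>y<n. if adj x y then h x y else 0)"
proof -
  define E where "E = {(x, y). x < n \<and> y < n \<and> adj x y}"
  define fwd where "fwd = (\<lambda>i. (p ! i, p ! Suc i))"
  define bwd where "bwd = (\<lambda>i. (p ! Suc i, p ! i))"
  have nth_inj: "i = j" if "i < length p" "j < length p" "p ! i = p ! j" for i j
    using nth_eq_iff_index_eq[OF \<open>distinct p\<close>] that by blast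
  have inj_fwd: "inj_on fwd {..<k}" and inj_bwd: "inj_on bwd {..<k}"
    unfolding inj_on_def fwd_def bwd_def using nth_inj len by (auto dest!: Suc_less_SucD)
  have disj: "fwd ` {..<k} \<inter> bwd ` {..<k} = {}"
  proof (rule ccontr)
    assume "fwd ` {..<k} \<inter> bwd ` {..<k} \<noteq> {}"
    then obtain i j where "i < k" "j < k" "p ! i = p ! Suc j" "p ! Suc i = p ! j"
      unfolding fwd_def bwd_def by blast
    then have "i = Suc j" "Suc i = j"
      using nth_inj len by auto
    then show False by simp
  qed
  have edge: "adj (p ! i) (p ! Suc i)" if "i < k" for i
    using walk len that unfolding is_walk_def by auto
  have "fwd ` {..<k} \<union> bwd ` {..<k} \<subseteq> E"
    using edge simple unfolding E_def fwd_def bwd_def simple_graph_def by blast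
  moreover have "finite E"
    by (rule finite_subset[of _ "{..<n} \<times> {..<n}"]) (auto simp: E_def)
  ultimately have "(\<Sum>e\<in>fwd ` {..<k} \<union> bwd ` {..<k}. case_prod h e) \<le> (\<Sum>e\<in>E. case_prod h e)"
    by (intro sum_mono2) (use nonneg in auto)
  moreover have "(\<Sum>e\<in>fwd ` {..<k} \<union> bwd ` {..<k}. case_prod h e) = 2 * (\<Sum>i<k. h (p ! i) (p ! Suc i))"
  proof -
    have "(\<Sum>e\<in>fwd ` {..<k} \<union> bwd ` {..<k}. case_prod h e)
        = (\<Sum>e\<in>fwd ` {..<k}. case_prod h e) + (\<Sum>e\<in>bwd ` {..<k}. case_prod h e)"
      by (rule sum.union_disjoint) (use disj in auto)
    also have "\<dots> = (\<Sum>i<k. case_prod h (fwd i)) + (\<Sum>i<k. case_prod h (bwd i))"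
      by (simp add: sum.reindex[OF inj_fwd] sum.reindex[OF inj_bwd])
    finally show ?thesis
      using sym by (simp add: fwd_def bwd_def)
  qed
  moreover have "(\<Sum>x<n. \<Sum>y<n. if adj x y then h x y else 0) = (\<Sum>e\<in>E. case_prod h e)"
    unfolding E_def by (rule sum_adj_pairs)
  ultimately show ?thesis by simp
qed

lemma square_sum_le_mult_sum_squares:
  fixes x :: "nat \<Rightarrow> real"
  shows "(\<Sum>i<k. x i)\<^sup>2 \<le> real k * (\<Sum>i<k. (x i)\<^sup>2)"
proof -
  have "0 \<le> (\<Sum>i<k. \<Sum>j<k. (x i - x j)\<^sup>2)"
    by (intro sum_nonneg) auto
  also have "(\<Sum>i<k. \<Sum>j<k. (x i - x j)\<^sup>2) = (\<Sum>i<k. \<Sum>j<k. (x i)\<^sup>2 + (x j)\<^sup>2 - 2 * (x i * x j))"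
    by (simp add: power2_eq_square algebra_simps)
  also have "\<dots> = 2 * real k * (\<Sum>i<k. (x i)\<^sup>2) - 2 * (\<Sum>i<k. x i)\<^sup>2"
    by (simp add: sum_subtractf sum.distrib sum_distrib_left sum_distrib_right power2_eq_square
        algebra_simps)
  finally show ?thesis by simp
qed

lemma alternating_telescope:
  fixes f :: "nat \<Rightarrow> real"
  shows "f 0 = (\<Sum>i<k. (-1)^i * (f i + f (Suc i))) + (-1)^k * f k"
  by (induction k) (simp_all add: algebra_simps)

lemma square_add_le_weighted:
  fixes s y q k :: real
  assumes "0 \<le> k" "0 \<le> q" "0 \<le> s" "s\<^sup>2 \<le> k * q"
  shows "(s + y)\<^sup>2 \<le> (k + 1/4) * (q + 4 * y\<^sup>2)"
proof (cases "k = 0")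
  case True
  then show ?thesis using assms by simp
next
  case False
  then have k: "k > 0" using assms by simp
  text \<open>Multiplied by \<open>4 k\<close>, the difference of the two sides is at least \<open>(s - 4 k y)\<^sup>2\<close>.\<close>
  have "4 * k * ((k + 1/4) * (q + 4 * y\<^sup>2) - (s + y)\<^sup>2)
      = (4*k + 1) * (k * q) + 16*k\<^sup>2*y\<^sup>2 - 4*k*s\<^sup>2 - 8*k*s*y"
    by (simp add: algebra_simps power2_eq_square)
  also have "\<dots> \<ge> (4*k + 1) * s\<^sup>2 + 16*k\<^sup>2*y\<^sup>2 - 4*k*s\<^sup>2 - 8*k*s*y"
    using assms k by (simp add: mult_left_mono)
  also have "(4*k + 1) * s\<^sup>2 + 16*k\<^sup>2*y\<^sup>2 - 4*k*s\<^sup>2 - 8*k*s*y = (s - 4*k*y)\<^sup>2"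
    by (simp add: algebra_simps power2_eq_square)
  finally have "0 \<le> 4 * k * ((k + 1/4) * (q + 4 * y\<^sup>2) - (s + y)\<^sup>2)"
    by (rule order_trans[OF zero_le_power2])
  then show ?thesis
    using k by (simp add: zero_le_mult_iff)
qed

lemma sum_weighted_square_combination:
  fixes K :: "nat \<Rightarrow> nat \<Rightarrow> real"
  assumes sym: "\<And>i j. K i j = K j i" and rows: "\<And>i. i < n \<Longrightarrow> (\<Sum>j<n. K i j) = d i"
  shows "(\<Sum>i<n. \<Sum>j<n. K i j * (a * g i + b * g j)\<^sup>2)
       = (a\<^sup>2 + b\<^sup>2) * (\<Sum>i<n. d i * (g i)\<^sup>2) + 2 * a * b * (\<Sum>i<n. \<Sum>j<n. K i j * (g i * g j))"
proof -
  have left: "(\<Sum>i<n. \<Sum>j<n. K i j * (g i)\<^sup>2) = (\<Sum>i<n. d i * (g i)\<^sup>2)"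
    by (simp add: rows flip: sum_distrib_right)
  have "(\<Sum>i<n. \<Sum>j<n. K i j * (g j)\<^sup>2) = (\<Sum>j<n. \<Sum>i<n. K j i * (g j)\<^sup>2)"
    by (subst sum.swap) (simp add: sym)
  also have "\<dots> = (\<Sum>i<n. d i * (g i)\<^sup>2)"
    by (rule left)
  finally have right: "(\<Sum>i<n. \<Sum>j<n. K i j * (g j)\<^sup>2) = (\<Sum>i<n. d i * (g i)\<^sup>2)" .
  have "(\<Sum>i<n. \<Sum>j<n. K i j * (a * g i + b * g j)\<^sup>2)
      = a\<^sup>2 * (\<Sum>i<n. \<Sum>j<n. K i j * (g i)\<^sup>2) + b\<^sup>2 * (\<Sum>i<n. \<Sum>j<n. K i j * (g j)\<^sup>2)
        + 2 * a * b * (\<Sum>i<n. \<Sum>j<n. K i j * (g i * g j))"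
    by (simp add: sum_distrib_left sum.distrib power2_eq_square algebra_simps)
  then show ?thesis
    unfolding left right by (simp add: algebra_simps)
qed

text \<open>\<open>v\<^sup>* K v\<close> is real and equals \<open>\<theta> v\<^sup>* D v\<close>, where \<open>v\<^sup>* D v > 0\<close>.\<close>
lemma symmetric_eigenvalue_real:
  fixes K :: "nat \<Rightarrow> nat \<Rightarrow> real" and v :: "nat \<Rightarrow> complex"
  assumes sym: "\<And>i j. K i j = K j i" and pos: "\<And>i. i < n \<Longrightarrow> 0 < d i"
    and eig: "\<And>i. i < n \<Longrightarrow> (\<Sum>j<n. of_real (K i j) * v j) = \<theta> * (of_real (d i) * v i)"
    and "i0 < n" "v i0 \<noteq> 0"
  shows "\<theta> = of_real (Re \<theta>)"
proof -
  define N where "N = (\<Sum>i<n. d i * (cmod (v i))\<^sup>2)"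
  define F where "F = (\<Sum>i<n. \<Sum>j<n. of_real (K i j) * (cnj (v i) * v j))"
  have "0 < d i0 * (cmod (v i0))\<^sup>2"
    using pos \<open>i0 < n\<close> \<open>v i0 \<noteq> 0\<close> by simp
  also have "\<dots> \<le> N"
    unfolding N_def using \<open>i0 < n\<close> pos
    by (intro member_le_sum) (auto intro!: mult_nonneg_nonneg simp: less_imp_le)
  finally have "0 < N" .
  have "F = (\<Sum>i<n. cnj (v i) * (\<Sum>j<n. of_real (K i j) * v j))"
    unfolding F_def by (simp add: sum_distrib_left algebra_simps)
  also have "\<dots> = (\<Sum>i<n. cnj (v i) * (\<theta> * (of_real (d i) * v i)))"
    by (rule sum.cong) (simp_all add: eig)
  also have "\<dots> = \<theta> * (\<Sum>i<n. of_real (d i) * (v i * cnj (v i)))"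
    by (simp add: sum_distrib_left algebra_simps)
  also have "\<dots> = \<theta> * of_real N"
    unfolding N_def by (simp add: complex_norm_square[symmetric])
  finally have F: "F = \<theta> * of_real N" .
  have "cnj F = (\<Sum>j<n. \<Sum>i<n. of_real (K i j) * (v i * cnj (v j)))"
    unfolding F_def by (subst sum.swap) simp
  also have "\<dots> = F"
    unfolding F_def by (intro sum.cong refl) (simp add: sym mult.commute)
  finally have "cnj \<theta> * of_real N = \<theta> * of_real N"
    unfolding F by simp
  then have "cnj \<theta> = \<theta>"
    using \<open>0 < N\<close> by simp
  then show ?thesis
    by (simp add: complex_eq_iff)
qed

lemma exists_opposite_sign:
  fixes d g :: "nat \<Rightarrow> real"
  assumes "(\<Sum>i<n. d i * g i) = 0" and pos: "\<And>i. i < n \<Longrightarrow> 0 < d i" and "z < n"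
  shows "\<exists>w<n. g z * g w \<le> 0"
proof (rule ccontr)
  assume "\<not> ?thesis"
  then have "0 < d w * (g z * g w)" if "w < n" for w
    using that pos[OF that] by (simp add: not_le)
  then have "0 < (\<Sum>w<n. d w * (g z * g w))"
    using \<open>z < n\<close> by (intro sum_pos) auto
  also have "\<dots> = g z * (\<Sum>w<n. d w * g w)"
    by (simp add: sum_distrib_left algebra_simps)
  finally show False
    using assms(1) by simp
qed

section \<open>Characteristic polynomials of matrices with constant row sums\<close>

text \<open>The action of \<open>A\<close> on the quotient of \<open>R\<^sup>n\<close> by the all-ones vector, written in the images of the
  standard basis vectors \<open>e\<^sub>1, \<dots>, e\<^sub>n\<^sub>-\<^sub>1\<close>; it is well defined when \<open>A\<close> has constant row sums.\<close>
definition ones_quotient_mat :: "'a::comm_ring_1 mat \<Rightarrow> 'a mat" where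
  "ones_quotient_mat A =
     mat (dim_row A - 1) (dim_col A - 1) (\<lambda>(i, j). A $$ (Suc i, Suc j) - A $$ (0, Suc j))"

lemma ones_quotient_mat_diff_cols:
  assumes "A \<in> carrier_mat n n"
  shows "ones_quotient_mat (mat n n (\<lambda>(i, j). A $$ (i, j) - c j)) = ones_quotient_mat A"
  using assms unfolding ones_quotient_mat_def by (intro eq_matI) auto

lemma index_mult_mat_square:
  assumes "A \<in> carrier_mat n n" "B \<in> carrier_mat n n" "i < n" "j < n"
  shows "(A * B) $$ (i, j) = (\<Sum>k<n. A $$ (i, k) * B $$ (k, j))"
  using assms by (simp add: scalar_prod_def atLeast0LessThan)

definition ones_col_mat :: "nat \<Rightarrow> 'a::comm_ring_1 mat" where
  "ones_col_mat n = mat n n (\<lambda>(i, j). if j = 0 \<or> i = j then 1 else 0)"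

definition ones_col_mat_inv :: "nat \<Rightarrow> 'a::comm_ring_1 mat" where
  "ones_col_mat_inv n = mat n n (\<lambda>(i, j). if i = j then 1 else if j = 0 then -1 else 0)"

lemma sum_ones_col_left:
  fixes f :: "nat \<Rightarrow> 'a::comm_ring_1"
  assumes "i < n" "0 < n"
  shows "(\<Sum>k<n. (if k = 0 \<or> i = k then 1 else 0) * f k) = f 0 + (if i = 0 then 0 else f i)"
proof -
  have "(\<Sum>k<n. (if k = 0 \<or> i = k then 1 else 0) * f k)
      = (\<Sum>k<n. (if k = 0 then f k else 0) + (if k = i then (if i = 0 then 0 else f i) else 0))"
    by (rule sum.cong) auto
  then show ?thesis
    using assms by (simp add: sum.distrib)
qed

lemma sum_ones_col_right:
  fixes f :: "nat \<Rightarrow> 'a::comm_ring_1"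
  assumes "j < n"
  shows "(\<Sum>k<n. f k * (if j = 0 \<or> k = j then 1 else 0)) = (if j = 0 then (\<Sum>k<n. f k) else f j)"
proof (cases "j = 0")
  case False
  then have "(\<Sum>k<n. f k * (if j = 0 \<or> k = j then 1 else 0)) = (\<Sum>k<n. if k = j then f k else 0)"
    by (intro sum.cong) auto
  then show ?thesis
    using assms False by simp
qed simp

lemma ones_col_mat_mult_left:
  assumes "X \<in> carrier_mat n n" "i < n" "j < n"
  shows "(ones_col_mat n * X) $$ (i, j) = X $$ (0, j) + (if i = 0 then 0 else X $$ (i, j))"
proof -
  have "(ones_col_mat n * X) $$ (i, j) = (\<Sum>k<n. (if k = 0 \<or> i = k then 1 else 0) * X $$ (k, j))"
    using assms by (subst index_mult_mat_square) (auto simp: ones_col_mat_def intro!: sum.cong)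
  then show ?thesis
    using assms by (simp add: sum_ones_col_left)
qed

lemma ones_col_mat_mult_right:
  assumes "X \<in> carrier_mat n n" "i < n" "j < n"
  shows "(X * ones_col_mat n) $$ (i, j) = (if j = 0 then (\<Sum>k<n. X $$ (i, k)) else X $$ (i, j))"
proof -
  have "(X * ones_col_mat n) $$ (i, j) = (\<Sum>k<n. X $$ (i, k) * (if j = 0 \<or> k = j then 1 else 0))"
    using assms by (subst index_mult_mat_square) (auto simp: ones_col_mat_def intro!: sum.cong)
  then show ?thesis
    using assms by (simp add: sum_ones_col_right)
qed

lemma ones_col_mat_inverse:
  assumes "0 < n"
  shows "ones_col_mat n * ones_col_mat_inv n = (1\<^sub>m n :: 'a::comm_ring_1 mat)"
    and "ones_col_mat_inv n * ones_col_mat n = (1\<^sub>m n :: 'a mat)"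
proof -
  have carrier: "(ones_col_mat n :: 'a mat) \<in> carrier_mat n n"
      "(ones_col_mat_inv n :: 'a mat) \<in> carrier_mat n n"
    unfolding ones_col_mat_def ones_col_mat_inv_def by auto
  show "ones_col_mat n * ones_col_mat_inv n = (1\<^sub>m n :: 'a mat)"
  proof (rule eq_matI)
    fix i j assume "i < dim_row (1\<^sub>m n :: 'a mat)" "j < dim_col (1\<^sub>m n :: 'a mat)"
    then have "i < n" "j < n" by auto
    then show "(ones_col_mat n * ones_col_mat_inv n) $$ (i, j) = (1\<^sub>m n :: 'a mat) $$ (i, j)"
      using carrier by (subst ones_col_mat_mult_left) (auto simp: ones_col_mat_inv_def)
  qed (use carrier in auto)
  show "ones_col_mat_inv n * ones_col_mat n = (1\<^sub>m n :: 'a mat)"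
  proof (rule eq_matI)
    fix i j assume "i < dim_row (1\<^sub>m n :: 'a mat)" "j < dim_col (1\<^sub>m n :: 'a mat)"
    then have ij: "i < n" "j < n" by auto
    show "(ones_col_mat_inv n * ones_col_mat n) $$ (i, j) = (1\<^sub>m n :: 'a mat) $$ (i, j)"
    proof (cases "j = 0")
      case True
      have "(\<Sum>k<n. (ones_col_mat_inv n :: 'a mat) $$ (i, k))
          = (\<Sum>k<n. (if k = i then 1 else 0) - (if k = 0 \<and> i \<noteq> 0 then 1 else 0) :: 'a)"
        using ij by (intro sum.cong) (auto simp: ones_col_mat_inv_def)
      also have "\<dots> = (if i = 0 then 1 else 0)"
        using ij assms by (simp add: sum_subtractf)
      finally show ?thesis
        using ij carrier True by (subst ones_col_mat_mult_right) auto
    next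
      case False
      then show ?thesis
        using ij carrier by (subst ones_col_mat_mult_right) (auto simp: ones_col_mat_inv_def)
    qed
  qed (use carrier in auto)
qed

lemma char_poly_1x1: "char_poly (mat 1 1 (\<lambda>_. c)) = [:-c, 1:]"
  by (simp add: char_poly_defs det_def sign_def)

text \<open>Conjugation by \<open>ones_col_mat n\<close> makes \<open>A\<close> block upper triangular.\<close>
lemma char_poly_const_row_sums:
  fixes A :: "'a::comm_ring_1 mat"
  assumes A: "A \<in> carrier_mat n n" and "0 < n" and rows: "\<And>i. i < n \<Longrightarrow> (\<Sum>j<n. A $$ (i, j)) = c"
  shows "char_poly A = [:-c, 1:] * char_poly (ones_quotient_mat A)"
proof -
  define S :: "'a mat" where "S = ones_col_mat n"
  define S' :: "'a mat" where "S' = ones_col_mat_inv n"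
  define C where "C = mat n n (\<lambda>(i, j). if j = 0 then (if i = 0 then c else 0)
                                           else A $$ (i, j) - (if i = 0 then 0 else A $$ (0, j)))"
  have carrier: "S \<in> carrier_mat n n" "S' \<in> carrier_mat n n" "C \<in> carrier_mat n n"
    unfolding S_def S'_def C_def ones_col_mat_def ones_col_mat_inv_def by auto
  have AS: "A * S = S * C"
  proof (rule eq_matI)
    fix i j assume "i < dim_row (S * C)" "j < dim_col (S * C)"
    then have "i < n" "j < n"
      using carrier by auto
    then show "(A * S) $$ (i, j) = (S * C) $$ (i, j)"
      using A carrier rows unfolding S_def
      by (simp only: ones_col_mat_mult_left ones_col_mat_mult_right) (auto simp: C_def)
  qed (use A carrier in auto)
  have "S * C * S' = A * S * S'"
    by (simp add: AS)
  also have "\<dots> = A * (S * S')"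
    using A carrier by (simp add: assoc_mult_mat[of A n n S n S' n])
  finally have similar: "similar_mat A C"
    using A carrier ones_col_mat_inverse[OF \<open>0 < n\<close>]
    by (intro similar_matI[of A C S S' n]) (auto simp: S_def S'_def)
  have blocks: "C = four_block_mat (mat 1 1 (\<lambda>_. c))
      (mat 1 (n - 1) (\<lambda>(_, j). C $$ (0, Suc j))) (0\<^sub>m (n - 1) 1) (ones_quotient_mat A)"
    using A \<open>0 < n\<close> by (intro eq_matI) (auto simp: C_def ones_quotient_mat_def)
  have "ones_quotient_mat A \<in> carrier_mat (n - 1) (n - 1)"
    using A by (simp add: ones_quotient_mat_def)
  then have "char_poly C = char_poly (mat 1 1 (\<lambda>_. c)) * char_poly (ones_quotient_mat A)"
    by (subst blocks, intro char_poly_four_block_zeros_col) auto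
  then show ?thesis
    using char_poly_similar[OF similar] char_poly_1x1[of c] by simp
qed

text \<open>The matrix in \<open>eig\<close> is \<open>P - 1 \<pi>\<^sup>T\<close>, and \<open>\<pi>\<^sup>T (P - 1 \<pi>\<^sup>T) = 0\<close>; so an eigenvector for \<open>\<theta> \<noteq> 0\<close> is
  orthogonal to \<open>\<pi>\<close>.\<close>
lemma stationary_deflation_eigenvector:
  fixes P :: "'a::field mat"
  assumes P: "P \<in> carrier_mat n n"
    and stationary: "\<And>j. j < n \<Longrightarrow> (\<Sum>i<n. \<pi> i * P $$ (i, j)) = \<pi> j" and total: "(\<Sum>i<n. \<pi> i) = 1"
    and v: "v \<in> carrier_vec n" and eig: "mat n n (\<lambda>(i, j). P $$ (i, j) - \<pi> j) *\<^sub>v v = \<theta> \<cdot>\<^sub>v v"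
    and "\<theta> \<noteq> 0"
  shows "(\<Sum>i<n. \<pi> i * v $ i) = 0" and "P *\<^sub>v v = \<theta> \<cdot>\<^sub>v v"
proof -
  define w where "w = (\<Sum>j<n. \<pi> j * v $ j)"
  have Bv: "\<theta> * v $ i = (\<Sum>j<n. P $$ (i, j) * v $ j) - w" if "i < n" for i
  proof -
    have "\<theta> * v $ i = (\<Sum>j<n. (P $$ (i, j) - \<pi> j) * v $ j)"
      using arg_cong[OF eig, of "\<lambda>x. x $ i"] v that by (simp add: scalar_prod_def atLeast0LessThan)
    then show ?thesis
      unfolding w_def by (simp add: left_diff_distrib sum_subtractf)
  qed
  have "\<theta> * w = (\<Sum>i<n. \<pi> i * (\<theta> * v $ i))"
    unfolding w_def by (simp add: sum_distrib_left algebra_simps)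
  also have "\<dots> = (\<Sum>i<n. \<pi> i * (\<Sum>j<n. P $$ (i, j) * v $ j)) - (\<Sum>i<n. \<pi> i) * w"
    by (simp add: Bv right_diff_distrib sum_subtractf sum_distrib_right)
  also have "(\<Sum>i<n. \<pi> i * (\<Sum>j<n. P $$ (i, j) * v $ j)) = (\<Sum>i<n. \<Sum>j<n. \<pi> i * (P $$ (i, j) * v $ j))"
    by (simp add: sum_distrib_left)
  also have "\<dots> = (\<Sum>j<n. \<Sum>i<n. \<pi> i * (P $$ (i, j) * v $ j))"
    by (rule sum.swap)
  also have "\<dots> = (\<Sum>j<n. (\<Sum>i<n. \<pi> i * P $$ (i, j)) * v $ j)"
    by (simp add: sum_distrib_right mult.assoc)
  also have "\<dots> = w"
    unfolding w_def by (simp add: stationary)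
  finally have "\<theta> * w = 0"
    using total by simp
  then show "(\<Sum>i<n. \<pi> i * v $ i) = 0"
    using \<open>\<theta> \<noteq> 0\<close> unfolding w_def by simp
  then show "P *\<^sub>v v = \<theta> \<cdot>\<^sub>v v"
    using P v by (intro eq_vecI) (simp_all add: Bv w_def scalar_prod_def atLeast0LessThan)
qed

lemma linear_factors_cofactor_roots:
  fixes Q :: "'a::idom poly"
  assumes prod: "(\<Prod>a\<leftarrow>evs. [:-a, 1:]) = [:-c, 1:] * Q" and x: "x \<in># mset evs - {#c#}"
  shows "poly Q x = 0"
proof -
  have as_mset: "(\<Prod>a\<leftarrow>evs. [:-a, 1:]) = (\<Prod>a\<in>#mset evs. [:-a, 1:])"
    by (induction evs) auto
  have "poly (\<Prod>a\<in>#mset evs. [:-a, 1:]) c = 0"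
    unfolding as_mset[symmetric] prod by simp
  then have "c \<in># mset evs"
    by (auto simp: poly_prod_mset)
  then have "(\<Prod>a\<in>#mset evs. [:-a, 1:]) = (\<Prod>a\<in>#add_mset c (mset evs - {#c#}). [:-a, 1:])"
    by (simp add: insert_DiffM)
  then have "[:-c, 1:] * Q = [:-c, 1:] * (\<Prod>a\<in>#mset evs - {#c#}. [:-a, 1:])"
    using prod as_mset by simp
  then have "Q = (\<Prod>a\<in>#mset evs - {#c#}. [:-a, 1:])"
    by (simp only: mult_left_cancel pCons_eq_0_iff one_neq_zero simp_thms)
  then show ?thesis
    using x by (auto simp: poly_prod_mset)
qed

section \<open>Simple random walk on a connected graph with one loop\<close>

locale graph_with_loop =
  fixes n :: nat and adj :: "nat \<Rightarrow> nat \<Rightarrow> bool" and r :: nat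
  assumes simple: "simple_graph n adj" and connected: "graph_connected n adj" and root: "r < n"
begin

text \<open>Edge weights of the walk: each edge-end at \<open>i\<close> leading to \<open>j\<close> counts once; the loop at \<open>r\<close> has
  two ends at \<open>r\<close>.\<close>
definition weight :: "nat \<Rightarrow> nat \<Rightarrow> real" where
  "weight i j = (if adj i j then 1 else 0) + (if i = j \<and> i = r then 2 else 0)"

abbreviation deg :: "nat \<Rightarrow> real" where
  "deg i \<equiv> real (deg_loop n adj r i)"

abbreviation edges :: real where
  "edges \<equiv> real (num_edges_loop n adj)"

abbreviation trel_bound :: real where
  "trel_bound \<equiv> real ((2 * diam n adj + 1) * num_edges_loop n adj)"

definition srw :: "complex mat" where
  "srw = map_mat complex_of_real (srw_matrix n adj r)"

definition stationary :: "nat \<Rightarrow> complex" where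
  "stationary i = complex_of_real (deg i / (2 * edges))"

lemma trel_bound_ge_one: "1 \<le> trel_bound"
  unfolding num_edges_loop_def by simp

lemma weight_sym: "weight i j = weight j i"
  using simple unfolding weight_def simple_graph_def by auto

lemma sum_weight_row: "(\<Sum>j<n. weight i j) = deg i"
proof -
  have "(\<Sum>j<n. if adj i j then 1 else 0 :: real) = real (card ({..<n} \<inter> {j. adj i j}))"
    by (simp add: sum.If_cases)
  also have "{..<n} \<inter> {j. adj i j} = {j. j < n \<and> adj i j}"
    by auto
  finally show ?thesis
    using root unfolding weight_def deg_loop_def by (simp add: sum.distrib)
qed

lemma deg_pos:
  assumes "i < n"
  shows "0 < deg i"
proof (cases "i = r")
  case False
  obtain p k where p: "is_walk adj p" "length p = Suc k" "p ! 0 = i" "p ! k = r"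
    using path_within_diam[OF connected assms root] by metis
  then have "0 < k"
    using False by (cases k) auto
  then have "adj i (p ! 1)"
    using p unfolding is_walk_def by force
  then have "p ! 1 \<in> {j. j < n \<and> adj i j}"
    using simple unfolding simple_graph_def by blast
  then show ?thesis
    unfolding deg_loop_def by (auto simp: card_gt_0_iff)
qed (simp add: deg_loop_def)

text \<open>Handshake lemma: every edge \<open>u < v\<close> contributes the two pairs \<open>(u, v)\<close> and \<open>(v, u)\<close>.\<close>
lemma sum_deg: "(\<Sum>i<n. deg i) = 2 * edges"
proof -
  define N where "N i = {j. j < n \<and> adj i j}" for i
  define E where "E = {(u, v). u < v \<and> v < n \<and> adj u v}"
  have "e \<in> (SIGMA i:{..<n}. N i) \<longleftrightarrow> e \<in> E \<union> prod.swap ` E" for e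
  proof -
    obtain u v where e: "e = (u, v)"
      by (cases e)
    have "e \<in> (SIGMA i:{..<n}. N i) \<longleftrightarrow> u < n \<and> v < n \<and> adj u v"
      unfolding e N_def by auto
    also have "\<dots> \<longleftrightarrow> (u < v \<and> v < n \<and> adj u v) \<or> (v < u \<and> u < n \<and> adj v u)"
      using simple unfolding simple_graph_def by (metis linorder_neqE_nat order.strict_trans)
    also have "\<dots> \<longleftrightarrow> e \<in> E \<union> prod.swap ` E"
      unfolding e E_def by (auto simp: image_iff)
    finally show ?thesis .
  qed
  then have pairs: "(SIGMA i:{..<n}. N i) = E \<union> prod.swap ` E"
    by blast
  have "finite E"
    by (rule finite_subset[of _ "{..<n} \<times> {..<n}"]) (auto simp: E_def)
  moreover have "E \<inter> prod.swap ` E = {}"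
    unfolding E_def by auto
  ultimately have "card (SIGMA i:{..<n}. N i) = 2 * card E"
    unfolding pairs by (simp add: card_Un_disjoint card_image)
  moreover have "card (SIGMA i:{..<n}. N i) = (\<Sum>i<n. card (N i))"
    by (rule card_SigmaI) (auto simp: N_def)
  ultimately have "(\<Sum>i<n. real (card (N i))) = 2 * real (card E)"
    by (metis of_nat_sum of_nat_mult of_nat_numeral)
  moreover have "deg i = real (card (N i)) + (if i = r then 2 else 0)" for i
    unfolding deg_loop_def N_def by simp
  ultimately show ?thesis
    using root unfolding num_edges_loop_def E_def by (simp add: sum.distrib)
qed

lemma sum_weight_split:
  "(\<Sum>i<n. \<Sum>j<n. weight i j * h i j) = (\<Sum>i<n. \<Sum>j<n. if adj i j then h i j else 0) + 2 * h r r"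
proof -
  have loop: "(\<Sum>j<n. if i = j \<and> i = r then c else 0) = (if i = r then c else 0)" for i and c :: real
    using root by (cases "i = r") auto
  have "(\<Sum>i<n. \<Sum>j<n. weight i j * h i j)
      = (\<Sum>i<n. (\<Sum>j<n. if adj i j then h i j else 0) + (\<Sum>j<n. if i = j \<and> i = r then 2 * h r r else 0))"
    unfolding weight_def by (intro sum.cong refl) (auto simp: sum.distrib[symmetric] intro!: sum.cong)
  then show ?thesis
    using root by (simp add: loop sum.distrib)
qed

subsection \<open>Dirichlet forms along shortest paths\<close>

lemma sq_diff_le_diam_energy:
  assumes "u < n" "v < n"
  shows "(g u - g v)\<^sup>2 \<le> real (diam n adj) * ((\<Sum>i<n. \<Sum>j<n. weight i j * (g i - g j)\<^sup>2) / 2)"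
proof -
  obtain p k where p: "is_walk adj p" "distinct p" "length p = Suc k" "k \<le> diam n adj"
      "p ! 0 = u" "p ! k = v"
    using path_within_diam[OF connected assms] .
  have "g u - g v = (\<Sum>i<k. g (p ! i) - g (p ! Suc i))"
    using sum_lessThan_telescope'[of "\<lambda>i. g (p ! i)" k] p by simp
  then have "(g u - g v)\<^sup>2 \<le> real k * (\<Sum>i<k. (g (p ! i) - g (p ! Suc i))\<^sup>2)"
    by (simp add: square_sum_le_mult_sum_squares)
  also have "\<dots> \<le> real (diam n adj) * ((\<Sum>x<n. \<Sum>y<n. if adj x y then (g x - g y)\<^sup>2 else 0) / 2)"
    using distinct_walk_edge_sum_le[OF simple p(1-3), of "\<lambda>x y. (g x - g y)\<^sup>2"] p(4)
    by (intro mult_mono) (auto simp: power2_commute sum_nonneg)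
  finally show ?thesis
    by (simp add: sum_weight_split)
qed

text \<open>Along a path to the loop vertex, \<open>g u\<close> is an alternating sum of the edge sums \<open>g x + g y\<close> and
  \<open>\<plusminus> g r\<close>; the loop contributes \<open>2 (2 g r)\<^sup>2\<close> to the energy.\<close>
lemma sq_le_diam_energy_plus:
  assumes "u < n"
  shows "(g u)\<^sup>2 \<le> (real (diam n adj) + 1/4) * ((\<Sum>i<n. \<Sum>j<n. weight i j * (g i + g j)\<^sup>2) / 2)"
proof -
  obtain p k where p: "is_walk adj p" "distinct p" "length p = Suc k" "k \<le> diam n adj"
      "p ! 0 = u" "p ! k = r"
    using path_within_diam[OF connected assms root] .
  define a where "a i = g (p ! i) + g (p ! Suc i)" for i
  define s where "s = (\<Sum>i<k. \<bar>a i\<bar>)"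
  define q where "q = (\<Sum>i<k. (a i)\<^sup>2)"
  have "g u = (\<Sum>i<k. (-1)^i * a i) + (-1)^k * g r"
    using alternating_telescope[of "\<lambda>i. g (p ! i)" k] p unfolding a_def by simp
  then have "\<bar>g u\<bar> \<le> \<bar>\<Sum>i<k. (-1)^i * a i\<bar> + \<bar>(-1)^k * g r\<bar>"
    by (simp only: abs_triangle_ineq)
  also have "\<dots> \<le> (\<Sum>i<k. \<bar>(-1)^i * a i\<bar>) + \<bar>(-1)^k * g r\<bar>"
    by (simp only: sum_abs add_right_mono)
  also have "\<dots> = s + \<bar>g r\<bar>"
    unfolding s_def by (simp add: abs_mult power_abs)
  finally have "\<bar>g u\<bar> \<le> s + \<bar>g r\<bar>" .
  then have "(g u)\<^sup>2 \<le> (s + \<bar>g r\<bar>)\<^sup>2"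
    by (metis abs_ge_zero power2_abs power_mono)
  also have "\<dots> \<le> (real k + 1/4) * (q + 4 * \<bar>g r\<bar>\<^sup>2)"
    using square_sum_le_mult_sum_squares[of "\<lambda>i. \<bar>a i\<bar>" k]
    by (intro square_add_le_weighted) (auto simp: s_def q_def sum_nonneg)
  also have "\<dots> \<le> (real (diam n adj) + 1/4)
      * ((\<Sum>x<n. \<Sum>y<n. if adj x y then (g x + g y)\<^sup>2 else 0) / 2 + 4 * (g r)\<^sup>2)"
    using distinct_walk_edge_sum_le[OF simple p(1-3), of "\<lambda>x y. (g x + g y)\<^sup>2"] p(4)
    by (intro mult_mono) (auto simp: add.commute q_def a_def sum_nonneg)
  also have "(\<Sum>x<n. \<Sum>y<n. if adj x y then (g x + g y)\<^sup>2 else 0) / 2 + 4 * (g r)\<^sup>2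
      = (\<Sum>i<n. \<Sum>j<n. weight i j * (g i + g j)\<^sup>2) / 2"
    unfolding sum_weight_split by (simp add: power2_eq_square algebra_simps)
  finally show ?thesis .
qed

subsection \<open>The spectral gap\<close>

lemma eigenfunction_energy:
  fixes g :: "nat \<Rightarrow> real"
  assumes eig: "\<And>i. i < n \<Longrightarrow> (\<Sum>j<n. weight i j * g j) = \<mu> * (deg i * g i)"
  shows "(\<Sum>i<n. \<Sum>j<n. weight i j * (a * g i + b * g j)\<^sup>2)
       = (a\<^sup>2 + b\<^sup>2 + 2 * a * b * \<mu>) * (\<Sum>i<n. deg i * (g i)\<^sup>2)"
proof -
  define S where "S = (\<Sum>i<n. deg i * (g i)\<^sup>2)"
  have "(\<Sum>i<n. \<Sum>j<n. weight i j * (g i * g j)) = (\<Sum>i<n. g i * (\<Sum>j<n. weight i j * g j))"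
    by (simp add: sum_distrib_left algebra_simps)
  also have "\<dots> = (\<Sum>i<n. g i * (\<mu> * (deg i * g i)))"
    by (rule sum.cong) (simp_all add: eig)
  also have "\<dots> = \<mu> * S"
    unfolding S_def by (simp add: sum_distrib_left power2_eq_square algebra_simps)
  finally have cross: "(\<Sum>i<n. \<Sum>j<n. weight i j * (g i * g j)) = \<mu> * S" .
  have "(\<Sum>i<n. \<Sum>j<n. weight i j * (a * g i + b * g j)\<^sup>2) = (a\<^sup>2 + b\<^sup>2) * S + 2 * a * b * (\<mu> * S)"
    using sum_weighted_square_combination[OF weight_sym sum_weight_row, of a g b]
    by (simp only: cross S_def)
  then show ?thesis
    unfolding S_def by (simp add: algebra_simps)
qed

text \<open>If \<open>z\<close> maximises \<open>g\<^sup>2\<close>, then \<open>\<Sum> deg g\<^sup>2 \<le> 2 |E| g(z)\<^sup>2\<close>, so any bound \<open>g(z)\<^sup>2 \<le> c x \<Sum> deg g\<^sup>2\<close> with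
  \<open>2 c \<le> 2 diam + 1\<close> forces \<open>x \<ge> 1 / ((2 diam + 1) |E|)\<close>.\<close>
lemma inverse_trel_bound_le:
  fixes g :: "nat \<Rightarrow> real"
  assumes zmax: "\<And>i. i < n \<Longrightarrow> (g i)\<^sup>2 \<le> (g z)\<^sup>2" and gz: "0 < (g z)\<^sup>2"
    and bound: "(g z)\<^sup>2 \<le> c * x * (\<Sum>i<n. deg i * (g i)\<^sup>2)"
    and "0 \<le> c" and c: "2 * c \<le> 2 * real (diam n adj) + 1"
  shows "1 / trel_bound \<le> x"
proof -
  define S where "S = (\<Sum>i<n. deg i * (g i)\<^sup>2)"
  have "S \<le> (\<Sum>i<n. deg i * (g z)\<^sup>2)"
    unfolding S_def by (intro sum_mono mult_left_mono zmax) auto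
  also have "\<dots> = 2 * edges * (g z)\<^sup>2"
    by (simp add: sum_deg flip: sum_distrib_right)
  finally have S_le: "S \<le> 2 * edges * (g z)\<^sup>2" .
  have "0 < c * x * S"
    using bound gz unfolding S_def by linarith
  moreover have "0 \<le> S"
    unfolding S_def by (intro sum_nonneg) simp
  ultimately have cx: "0 < c * x"
    by (simp add: zero_less_mult_iff)
  then have "0 < x"
    using \<open>0 \<le> c\<close> by (simp add: zero_less_mult_iff)
  have "1 * (g z)\<^sup>2 \<le> (2 * c * (x * edges)) * (g z)\<^sup>2"
    using bound mult_left_mono[OF S_le, of "c * x"] cx unfolding S_def by (simp add: algebra_simps)
  then have "1 \<le> (2 * c) * (x * edges)"
    using gz by (rule mult_right_le_imp_le)
  also have "\<dots> \<le> (2 * real (diam n adj) + 1) * (x * edges)"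
    using c \<open>0 < x\<close> by (intro mult_right_mono) auto
  finally show ?thesis
    using trel_bound_ge_one by (simp add: divide_le_eq algebra_simps)
qed

lemma real_eigenfunction_gap:
  fixes g :: "nat \<Rightarrow> real"
  assumes eig: "\<And>i. i < n \<Longrightarrow> (\<Sum>j<n. weight i j * g j) = \<mu> * (deg i * g i)"
    and orth: "(\<Sum>i<n. deg i * g i) = 0" and "i0 < n" "g i0 \<noteq> 0"
  shows "1 / trel_bound \<le> 1 - \<mu>" and "1 / trel_bound \<le> 1 + \<mu>"
proof -
  define D where "D = real (diam n adj)"
  define S where "S = (\<Sum>i<n. deg i * (g i)\<^sup>2)"
  note energy = eigenfunction_energy[OF eig, folded S_def]
  define m where "m = Max ((\<lambda>i. (g i)\<^sup>2) ` {..<n})"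
  have "m \<in> (\<lambda>i. (g i)\<^sup>2) ` {..<n}"
    unfolding m_def using \<open>i0 < n\<close> by (intro Max_in) auto
  then obtain z where z: "z < n" and zm: "(g z)\<^sup>2 = m"
    by auto
  have zmax: "(g i)\<^sup>2 \<le> (g z)\<^sup>2" if "i < n" for i
    unfolding zm m_def using that by (intro Max_ge) auto
  have "0 < (g i0)\<^sup>2"
    using \<open>g i0 \<noteq> 0\<close> by simp
  then have gz: "0 < (g z)\<^sup>2"
    using zmax[OF \<open>i0 < n\<close>] by linarith
  obtain w where "w < n" "g z * g w \<le> 0"
    using exists_opposite_sign[OF orth deg_pos z] by blast
  moreover have "(g z - g w)\<^sup>2 = (g z)\<^sup>2 + ((g w)\<^sup>2 - 2 * (g z * g w))"
    by (simp add: power2_eq_square algebra_simps)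
  ultimately have "(g z)\<^sup>2 \<le> (g z - g w)\<^sup>2"
    using zero_le_power2[of "g w"] by linarith
  also have "\<dots> \<le> D * ((1 + 1 - 2 * \<mu>) * S / 2)"
    using sq_diff_le_diam_energy[OF z \<open>w < n\<close>, of g] energy[of 1 "-1"] unfolding D_def by simp
  also have "\<dots> = D * (1 - \<mu>) * S"
    by (simp add: field_simps)
  finally show "1 / trel_bound \<le> 1 - \<mu>"
    using inverse_trel_bound_le[of g z D "1 - \<mu>", OF zmax gz] unfolding S_def D_def by simp
  have "(g z)\<^sup>2 \<le> (D + 1/4) * ((1 + 1 + 2 * \<mu>) * S / 2)"
    using sq_le_diam_energy_plus[OF z, of g] energy[of 1 1] unfolding D_def by simp
  also have "\<dots> = (D + 1/4) * (1 + \<mu>) * S"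
    by (simp add: field_simps)
  finally show "1 / trel_bound \<le> 1 + \<mu>"
    using inverse_trel_bound_le[of g z "D + 1/4" "1 + \<mu>", OF zmax gz] unfolding S_def D_def by simp
qed

lemma eigenfunction_gap:
  fixes v :: "nat \<Rightarrow> complex"
  assumes eig: "\<And>i. i < n \<Longrightarrow> (\<Sum>j<n. of_real (weight i j) * v j) = \<theta> * (of_real (deg i) * v i)"
    and orth: "(\<Sum>i<n. of_real (deg i) * v i) = 0" and "i0 < n" "v i0 \<noteq> 0"
  shows "cmod \<theta> \<le> 1 - 1 / trel_bound"
proof -
  define \<mu> where "\<mu> = Re \<theta>"
  have \<theta>: "\<theta> = of_real \<mu>"
    unfolding \<mu>_def using symmetric_eigenvalue_real[OF weight_sym deg_pos eig assms(3,4)] .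
  have "1 / trel_bound \<le> 1 - \<mu> \<and> 1 / trel_bound \<le> 1 + \<mu>"
  proof (cases "Re (v i0) = 0")
    case False
    have "(\<Sum>j<n. weight i j * Re (v j)) = \<mu> * (deg i * Re (v i))" if "i < n" for i
      using arg_cong[OF eig[OF that], of Re] unfolding \<theta> by simp
    moreover have "(\<Sum>i<n. deg i * Re (v i)) = 0"
      using arg_cong[OF orth, of Re] by simp
    ultimately show ?thesis
      using real_eigenfunction_gap[of "\<lambda>i. Re (v i)"] \<open>i0 < n\<close> False by blast
  next
    case True
    then have "Im (v i0) \<noteq> 0"
      using \<open>v i0 \<noteq> 0\<close> by (simp add: complex_eq_iff)
    have "(\<Sum>j<n. weight i j * Im (v j)) = \<mu> * (deg i * Im (v i))" if "i < n" for i
      using arg_cong[OF eig[OF that], of Im] unfolding \<theta> by simp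
    moreover have "(\<Sum>i<n. deg i * Im (v i)) = 0"
      using arg_cong[OF orth, of Im] by simp
    ultimately show ?thesis
      using real_eigenfunction_gap[of "\<lambda>i. Im (v i)"] \<open>i0 < n\<close> \<open>Im (v i0) \<noteq> 0\<close> by blast
  qed
  then show ?thesis
    unfolding \<theta> norm_of_real abs_le_iff by linarith
qed

lemma srw_carrier: "srw \<in> carrier_mat n n"
  unfolding srw_def srw_matrix_def by simp

lemma srw_entry: "i < n \<Longrightarrow> j < n \<Longrightarrow> srw $$ (i, j) = of_real (weight i j / deg i)"
  unfolding srw_def srw_matrix_def weight_def by simp

lemma sum_srw_row:
  assumes "i < n"
  shows "(\<Sum>j<n. srw $$ (i, j)) = 1"
proof -
  have "(\<Sum>j<n. srw $$ (i, j)) = (\<Sum>j<n. complex_of_real (weight i j / deg i))"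
    by (rule sum.cong) (simp_all add: srw_entry assms)
  also have "\<dots> = of_real ((\<Sum>j<n. weight i j) / deg i)"
    by (simp add: sum_divide_distrib)
  finally show ?thesis
    using deg_pos[OF assms] by (simp add: sum_weight_row)
qed

lemma sum_stationary: "(\<Sum>i<n. stationary i) = 1"
proof -
  have "(\<Sum>i<n. stationary i) = of_real ((\<Sum>i<n. deg i) / (2 * edges))"
    unfolding stationary_def by (simp add: sum_divide_distrib)
  then show ?thesis
    using trel_bound_ge_one by (simp add: sum_deg num_edges_loop_def)
qed

lemma stationary_srw: "j < n \<Longrightarrow> (\<Sum>i<n. stationary i * srw $$ (i, j)) = stationary j"
proof -
  assume "j < n"
  have "(\<Sum>i<n. stationary i * srw $$ (i, j)) = of_real ((\<Sum>i<n. weight j i) / (2 * edges))"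
    using \<open>j < n\<close> deg_pos
    by (simp add: stationary_def srw_entry weight_sym[of _ j] sum_divide_distrib)
  then show ?thesis
    by (simp add: stationary_def sum_weight_row)
qed

lemma char_poly_srw: "char_poly srw = [:-1, 1:] * char_poly (ones_quotient_mat srw)"
  using char_poly_const_row_sums[OF srw_carrier _ sum_srw_row] root by simp

lemma srw_eigenvector_weight:
  assumes "v \<in> carrier_vec n" "srw *\<^sub>v v = \<theta> \<cdot>\<^sub>v v" "i < n"
  shows "(\<Sum>j<n. of_real (weight i j) * v $ j) = \<theta> * (of_real (deg i) * v $ i)"
proof -
  have "\<theta> * v $ i = (\<Sum>j<n. of_real (weight i j / deg i) * v $ j)"
    using arg_cong[OF assms(2), of "\<lambda>x. x $ i"] assms(1,3) srw_carrier
    by (simp add: scalar_prod_def atLeast0LessThan srw_entry)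
  then show ?thesis
    using deg_pos[OF assms(3)] by (simp add: sum_divide_distrib[symmetric] field_simps)
qed

lemma deg_orthogonal_if_stationary_orthogonal:
  assumes "(\<Sum>i<n. stationary i * v i) = 0"
  shows "(\<Sum>i<n. of_real (deg i) * v i) = 0"
proof -
  have "(\<Sum>i<n. stationary i * v i) = (\<Sum>i<n. of_real (deg i) * v i) / of_real (2 * edges)"
    unfolding stationary_def by (simp add: sum_divide_distrib)
  moreover have "complex_of_real (2 * edges) \<noteq> 0"
    by (simp only: of_real_eq_0_iff) (simp add: num_edges_loop_def)
  ultimately show ?thesis
    using assms by simp
qed

text \<open>The roots of the cofactor of \<open>x - 1\<close> are the eigenvalues of \<open>srw - 1 stationary\<^sup>T\<close>, whose
  nonzero ones belong to eigenvectors orthogonal to the degrees.\<close>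
lemma cofactor_root_bound:
  assumes "poly (char_poly (ones_quotient_mat srw)) \<theta> = 0"
  shows "cmod \<theta> \<le> 1 - 1 / trel_bound"
proof (cases "\<theta> = 0")
  case True
  then show ?thesis
    using trel_bound_ge_one by simp
next
  case False
  define B where "B = mat n n (\<lambda>(i, j). srw $$ (i, j) - stationary j)"
  have B: "B \<in> carrier_mat n n"
    unfolding B_def by simp
  have "(\<Sum>j<n. B $$ (i, j)) = 0" if "i < n" for i
    using that sum_srw_row sum_stationary by (simp add: B_def sum_subtractf)
  then have "char_poly B = [:-0, 1:] * char_poly (ones_quotient_mat srw)"
    using char_poly_const_row_sums[OF B _, of 0] ones_quotient_mat_diff_cols[OF srw_carrier] root
    unfolding B_def by simp
  then have "eigenvalue B \<theta>"
    using assms eigenvalue_root_char_poly[OF B] by simp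
  then obtain v where v: "v \<in> carrier_vec n" "v \<noteq> 0\<^sub>v n" "B *\<^sub>v v = \<theta> \<cdot>\<^sub>v v"
    using B unfolding eigenvalue_def eigenvector_def by auto
  obtain i0 where "i0 < n" "v $ i0 \<noteq> 0"
    using v(1,2) by (metis carrier_vecD eq_vecI index_zero_vec(1,2))
  note deflation = stationary_deflation_eigenvector[OF srw_carrier stationary_srw sum_stationary v(1)
      v(3)[unfolded B_def] False]
  show ?thesis
    using eigenfunction_gap[where v = "\<lambda>i. v $ i"] \<open>i0 < n\<close> \<open>v $ i0 \<noteq> 0\<close>
      srw_eigenvector_weight[OF v(1) deflation(2)] deg_orthogonal_if_stationary_orthogonal[OF deflation(1)]
    by blast
qed

end

theorem mainTheorem7:
  fixes n :: nat and adj :: "nat \<Rightarrow> nat \<Rightarrow> bool" and r :: nat and evs :: "complex list"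
  assumes "is_tree n adj"
    and "r < n"
    and "char_poly (map_mat complex_of_real (srw_matrix n adj r)) = (\<Prod>a\<leftarrow>evs. [:- a, 1:])"
  shows "0 < abs_spectral_gap evs \<and>
         relaxation_time evs \<le> real ((2 * diam n adj + 1) * num_edges_loop n adj)"
proof -
  interpret graph_with_loop n adj r
    using assms(1,2) by unfold_locales (auto simp: is_tree_def)
  have "cmod x \<le> 1 - 1 / trel_bound" if "x \<in># mset evs - {#1#}" for x
    using linear_factors_cofactor_roots[OF _ that] cofactor_root_bound assms(3) char_poly_srw
    unfolding srw_def by metis
  then have "Max (insert 0 (cmod ` set_mset (mset evs - {#1#}))) \<le> 1 - 1 / trel_bound"
    using trel_bound_ge_one by (subst Max_le_iff) auto
  then have gap: "1 / trel_bound \<le> abs_spectral_gap evs"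
    unfolding abs_spectral_gap_def by linarith
  moreover have "0 < 1 / trel_bound"
    using trel_bound_ge_one by simp
  ultimately have "0 < abs_spectral_gap evs"
    by linarith
  moreover have "relaxation_time evs \<le> trel_bound"
    unfolding relaxation_time_def using gap \<open>0 < abs_spectral_gap evs\<close> trel_bound_ge_one
    by (simp add: divide_le_eq mult.commute)
  ultimately show ?thesis ..
qed

end
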